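(* For classes $[\mathcal{K}],[\mathcal{J}]\in\mathbb{P}(\mathcal{C})$: (1) $\Delta([\mathcal{K}],[\mathcal{J}])=1$ if and only if $\delta([\mathcal{K}],[\mathcal{J}])=1$; (2) if $\delta([\mathcal{K}],[\mathcal{J}])=2$, then $\Delta([\mathcal{K}],[\mathcal{J}])=2$.
   Context: $\mathcal{C}$ is the smooth knot concordance group; $d(\mathcal{K},\mathcal{J})=g_4(\mathcal{K}\,\#\,-\mathcal{J})$, $g_4$ the smooth four-genus. Let $\mathcal{C}^\circ=\mathcal{C}\setminus\{0\}$; $\mathcal{K}\sim'\mathcal{J}$ if there exist $\mathcal{M}\in\mathcal{C}$ and $r,s\in\mathbb{Z}$ with $\mathcal{K}=r\mathcal{M}$, $\mathcal{J}=s\mathcal{M}$; $\sim$ is the equivalence relation generated by $\sim'$; $\mathbb{P}(\mathcal{C})=\mathcal{C}^\circ/\sim$. Define $\delta([\mathcal{K}],[\mathcal{J}])=\min\{d(\mathcal{K}',\mathcal{J}'):\mathcal{K}'\in[\mathcal{K}],\mathcal{J}'\in[\mathcal{J}]\}$ and $\Delta([\mathcal{K}],[\mathcal{J}])=\min\sum_{i=0}^{n-1}\delta([\mathcal{K}_i],[\mathcal{K}_{i+1}])$ over all finite sequences of classes with $[\mathcal{K}_0]=[\mathcal{K}]$, $[\mathcal{K}_n]=[\mathcal{J}]$. *)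

theory Defs
  imports Main
begin

text \<open>Abstract model: the concordance group is modelled by an arbitrary abelian
group (type class ab_group_add), the smooth four-genus by a function g4 into nat.\<close>

definition zsmul :: "int \<Rightarrow> 'a::ab_group_add \<Rightarrow> 'a" where
  "zsmul r x = (if r \<ge> 0 then (\<Sum>_\<in>{..<nat r}. x) else - (\<Sum>_\<in>{..<nat (- r)}. x))"

definition cdist :: "('a::ab_group_add \<Rightarrow> nat) \<Rightarrow> 'a \<Rightarrow> 'a \<Rightarrow> nat" where
  "cdist g4 K J = g4 (K + - J)"

definition Cnz :: "'a::ab_group_add set" where
  "Cnz = UNIV - {0}"

definition prerel :: "'a::ab_group_add \<Rightarrow> 'a \<Rightarrow> bool" where
  "prerel K J \<longleftrightarrow> (\<exists>M r s. K = zsmul r M \<and> J = zsmul s M)"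

definition simrel :: "('a::ab_group_add \<times> 'a) set" where
  "simrel = (Id_on Cnz \<union> {(K, J). K \<in> Cnz \<and> J \<in> Cnz \<and> prerel K J}
             \<union> {(K, J). K \<in> Cnz \<and> J \<in> Cnz \<and> prerel J K})\<^sup>*"

definition PC :: "'a::ab_group_add set set" where
  "PC = Cnz // simrel"

definition delta :: "('a::ab_group_add \<Rightarrow> nat) \<Rightarrow> 'a set \<Rightarrow> 'a set \<Rightarrow> nat" where
  "delta g4 A B = Inf {cdist g4 K' J' | K' J'. K' \<in> A \<and> J' \<in> B}"

definition Delta :: "('a::ab_group_add \<Rightarrow> nat) \<Rightarrow> 'a set \<Rightarrow> 'a set \<Rightarrow> nat" where
  "Delta g4 A B = Inf {sum_list (map2 (delta g4) xs (tl xs)) | xs.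
      xs \<noteq> [] \<and> hd xs = A \<and> last xs = B \<and> set xs \<subseteq> PC}"

end

theory Submission
  imports Defs
begin

text \<open>A \<open>Delta\<close>-minimising chain of total weight at
  most \<open>1\<close> therefore consists of repetitions of its endpoints joined by at most one step of
  weight \<open>1\<close>, so \<open>Delta = delta\<close> whenever \<open>Delta \<le> 1\<close>. Together with
  \<open>Delta \<le> delta\<close> (the one-step chain) this gives both claims.\<close>

lemma equiv_simrel: "equiv UNIV (simrel :: ('a::ab_group_add \<times> 'a) set)"
proof (rule equivI)
  show "sym (simrel :: ('a \<times> 'a) set)"
    unfolding simrel_def by (rule sym_rtrancl) (auto simp: sym_def)
qed (auto simp: simrel_def refl_rtrancl trans_rtrancl)

lemma PC_subset_quotient: "PC \<subseteq> UNIV // (simrel :: ('a::ab_group_add \<times> 'a) set)"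
  unfolding PC_def quotient_def by blast

lemma PC_nonempty: "X \<in> PC \<Longrightarrow> X \<noteq> {}"
  using in_quotient_imp_non_empty[OF equiv_simrel] PC_subset_quotient by blast

lemma PC_eq_if_common_element: "X \<in> PC \<Longrightarrow> Y \<in> PC \<Longrightarrow> z \<in> X \<Longrightarrow> z \<in> Y \<Longrightarrow> X = Y"
  using quotient_disj[OF equiv_simrel] PC_subset_quotient by blast

lemma chain_weight_le_one:
  fixes d :: "'b \<Rightarrow> 'b \<Rightarrow> nat"
  assumes d_eq_0_iff: "\<And>x y. x \<in> S \<Longrightarrow> y \<in> S \<Longrightarrow> d x y = 0 \<longleftrightarrow> x = y"
    and "xs \<noteq> []" "set xs \<subseteq> S" "sum_list (map2 d xs (tl xs)) \<le> 1"
  shows "d (hd xs) (last xs) = sum_list (map2 d xs (tl xs))"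
  using assms(2-)
proof (induction xs rule: induct_list012)
  case (2 x)
  then show ?case using d_eq_0_iff by simp
next
  case (3 x y rest)
  let ?w = "sum_list (map2 d (y # rest) rest)"
  have x: "x \<in> S" and y: "y \<in> S" using "3.prems" by auto
  have weight: "d x y + ?w \<le> 1" using "3.prems" by simp
  have IH: "d y (last (y # rest)) = ?w" using "3.IH"(2) "3.prems" by simp
  show ?case
  proof (cases "d x y = 0")
    case True
    then show ?thesis using IH d_eq_0_iff[OF x y] by simp
  next
    case False
    then have "?w = 0" using weight by linarith
    have "last (y # rest) \<in> S" using "3.prems"(2) by auto
    moreover have "d y (last (y # rest)) = 0" using IH \<open>?w = 0\<close> by simp
    ultimately have "last (y # rest) = y" using d_eq_0_iff[OF y] by metis
    then show ?thesis using \<open>?w = 0\<close> by simp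
  qed
qed simp

lemma delta_attained:
  assumes "X \<in> PC" "Y \<in> PC"
  obtains K J where "K \<in> X" "J \<in> Y" "delta g4 X Y = cdist g4 K J"
proof -
  let ?S = "{cdist g4 K' J' | K' J'. K' \<in> X \<and> J' \<in> Y}"
  obtain K J where "K \<in> X" "J \<in> Y" using PC_nonempty assms by blast
  then have "?S \<noteq> {}" by blast
  then have "Inf ?S \<in> ?S" by (rule Inf_nat_def1)
  then show ?thesis using that unfolding delta_def by blast
qed

lemma Delta_le_delta:
  assumes "A \<in> PC" "B \<in> PC"
  shows "Delta g4 A B \<le> delta g4 A B"
proof -
  have "delta g4 A B \<in> {sum_list (map2 (delta g4) xs (tl xs)) | xs.
      xs \<noteq> [] \<and> hd xs = A \<and> last xs = B \<and> set xs \<subseteq> PC}"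
    using assms by (intro CollectI exI[of _ "[A, B]"]) simp
  then show ?thesis unfolding Delta_def by (rule cInf_lower) simp
qed

lemma Delta_attained:
  assumes "A \<in> PC" "B \<in> PC"
  obtains xs where "xs \<noteq> []" "hd xs = A" "last xs = B" "set xs \<subseteq> PC"
    "Delta g4 A B = sum_list (map2 (delta g4) xs (tl xs))"
proof -
  let ?S = "{sum_list (map2 (delta g4) xs (tl xs)) | xs.
      xs \<noteq> [] \<and> hd xs = A \<and> last xs = B \<and> set xs \<subseteq> PC}"
  have "delta g4 A B \<in> ?S"
    using assms by (intro CollectI exI[of _ "[A, B]"]) simp
  then have "Inf ?S \<in> ?S" by (intro Inf_nat_def1) blast
  then show ?thesis using that unfolding Delta_def by blast
qed

context
  fixes g4 :: "'a::ab_group_add \<Rightarrow> nat"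
  assumes g4_zero: "\<And>x. g4 x = 0 \<longleftrightarrow> x = 0"
begin

lemma cdist_eq_0_iff: "cdist g4 K J = 0 \<longleftrightarrow> K = J"
  unfolding cdist_def g4_zero by simp

lemma delta_eq_0_iff:
  assumes "X \<in> PC" "Y \<in> PC"
  shows "delta g4 X Y = 0 \<longleftrightarrow> X = Y"
proof
  assume "delta g4 X Y = 0"
  obtain K J where "K \<in> X" "J \<in> Y" "delta g4 X Y = cdist g4 K J"
    using delta_attained[OF assms] .
  with \<open>delta g4 X Y = 0\<close> have "K = J" using cdist_eq_0_iff by simp
  then show "X = Y" using PC_eq_if_common_element assms \<open>K \<in> X\<close> \<open>J \<in> Y\<close> by blast
next
  assume "X = Y"
  obtain K where "K \<in> X" using PC_nonempty[OF assms(1)] by blast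
  then have "0 \<in> {cdist g4 K' J' | K' J'. K' \<in> X \<and> J' \<in> X}"
    using cdist_eq_0_iff by force
  then have "delta g4 X X \<le> 0" unfolding delta_def by (rule cInf_lower) simp
  then show "delta g4 X Y = 0" using \<open>X = Y\<close> by simp
qed

lemma Delta_eq_delta_if_le_one:
  assumes "A \<in> PC" "B \<in> PC" "Delta g4 A B \<le> 1"
  shows "Delta g4 A B = delta g4 A B"
proof -
  obtain xs where xs: "xs \<noteq> []" "hd xs = A" "last xs = B" "set xs \<subseteq> PC"
    and Delta_eq: "Delta g4 A B = sum_list (map2 (delta g4) xs (tl xs))"
    using Delta_attained[OF assms(1,2)] by blast
  show ?thesis
    using chain_weight_le_one[of PC "delta g4" xs] delta_eq_0_iff xs Delta_eq assms(3)
    by simp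
qed

end

theorem theorem6p3:
  fixes g4 :: "'a::ab_group_add \<Rightarrow> nat" and A B :: "'a set"
  assumes g4_zero: "\<And>x. g4 x = 0 \<longleftrightarrow> x = 0"
    and g4_neg: "\<And>x. g4 (- x) = g4 x"
    and g4_sub: "\<And>x y. g4 (x + y) \<le> g4 x + g4 y"
    and A: "A \<in> PC" and B: "B \<in> PC"
  shows "(Delta g4 A B = 1 \<longleftrightarrow> delta g4 A B = 1)
         \<and> (delta g4 A B = 2 \<longrightarrow> Delta g4 A B = 2)"
proof -
  have le: "Delta g4 A B \<le> delta g4 A B"
    using Delta_le_delta[OF A B] .
  have eq: "Delta g4 A B \<le> 1 \<Longrightarrow> Delta g4 A B = delta g4 A B"
    using Delta_eq_delta_if_le_one[OF g4_zero A B] .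
  show ?thesis
  proof (cases "Delta g4 A B \<le> 1")
    case True
    then show ?thesis using eq by auto
  next
    case False
    then show ?thesis using le by auto
  qed
qed

end
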